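(* Let $p(\cdot):\mathbb{R}^n\to(0,\infty)$ be measurable with $0<p_-\le p_+<\infty$. If $\omega\in\mathcal{W}_{p(\cdot)}$, then there is a constant $C\ge1$ such that for every cube $Q\subset\mathbb{R}^n$, \[ \|\chi_Q\|_{L^{p(\cdot)}_\omega}\le\|\chi_{2Q}\|_{L^{p(\cdot)}_\omega}\le C\|\chi_Q\|_{L^{p(\cdot)}_\omega}. \]
   Context: $2Q$ denotes the cube with the same center as $Q$ and twice its side length. For measurable $p(\cdot)$, $p_-=\operatorname{ess\,inf} p$, $p_+=\operatorname{ess\,sup} p$. A weight is a locally integrable $\omega$ with $0<\omega<\infty$ a.e. $\|f\|_{L^{p(\cdot)}_\omega}:=\|f\omega\|_{L^{p(\cdot)}}$, where $\|g\|_{L^{p(\cdot)}}=\inf\{\lambda>0:\int|g(x)/\lambda|^{p(x)}dx\le1\}$; $t'(\cdot)$ denotes the conjugate exponent of $t(\cdot)\ge1$; $M$ is the Hardy–Littlewood maximal operator. $\mathcal{W}_{p(\cdot)}$ is the set of weights $\omega$ such that: (i) there exists $0<p_\ast<\min\{1,p_-\}$ with $\|\chi_Q\|_{L^{p(\cdot)/p_\ast}_{\omega^{p_\ast}}}<\infty$ and $\|\chi_Q\|_{L^{(p(\cdot)/p_\ast)'}_{\omega^{-p_\ast}}}<\infty$ for all cubes $Q$; (ii) there exist $\kappa>1$, $s>1$ such that $M$ is bounded on $L^{(sp(\cdot))'/\kappa}_{\omega^{-\kappa/s}}$. *)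

theory Defs
  imports "HOL-Analysis.Analysis" "HOL-Probability.Essential_Supremum"
begin

text \<open>Closed axis-parallel cube with centre c and half side length r (side length 2r).
  For a cube Q = cube c r, the cube 2Q is cube c (2 r).\<close>
definition cube :: "real^'n \<Rightarrow> real \<Rightarrow> (real^'n) set" where
  "cube c r = {x. \<forall>i. \<bar>x$i - c$i\<bar> \<le> r}"

definition cubes :: "(real^'n) set set" where
  "cubes = {cube c r | c r. r > 0}"

definition p_plus :: "(real^'n \<Rightarrow> real) \<Rightarrow> ereal" where
  "p_plus p = esssup lebesgue (\<lambda>x. ereal (p x))"

definition p_minus :: "(real^'n \<Rightarrow> real) \<Rightarrow> ereal" where
  "p_minus p = - esssup lebesgue (\<lambda>x. - ereal (p x))"

definition epow :: "ennreal \<Rightarrow> real \<Rightarrow> ennreal" where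
  "epow a r = (if a = \<infinity> then \<infinity> else ennreal (enn2real a powr r))"

text \<open>Modular of the variable Lebesgue space with exponent q(.) in (0,\<infinity>]:
  integral of |g/\<lambda>|^q over {q < \<infinity>} plus the essential sup of |g/\<lambda>| over {q = \<infinity>}.\<close>
definition modular :: "(real^'n \<Rightarrow> ereal) \<Rightarrow> (real^'n \<Rightarrow> ennreal) \<Rightarrow> real \<Rightarrow> ennreal" where
  "modular q g lam =
     (\<integral>\<^sup>+ x. (if q x = \<infinity> then 0 else epow (g x / ennreal lam) (real_of_ereal (q x))) \<partial>lebesgue)
     + Inf {c. AE x in lebesgue. q x = \<infinity> \<longrightarrow> g x / ennreal lam \<le> c}"

text \<open>Luxemburg (quasi-)norm; the infimum of the empty set is \<infinity>.\<close>
definition vnorm :: "(real^'n \<Rightarrow> ereal) \<Rightarrow> (real^'n \<Rightarrow> ennreal) \<Rightarrow> ennreal" where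
  "vnorm q g = Inf {ennreal lam | lam. lam > 0 \<and> modular q g lam \<le> 1}"

definition wnorm :: "(real^'n \<Rightarrow> ereal) \<Rightarrow> (real^'n \<Rightarrow> real) \<Rightarrow> (real^'n \<Rightarrow> real) \<Rightarrow> ennreal" where
  "wnorm q w f = vnorm q (\<lambda>x. ennreal \<bar>f x * w x\<bar>)"

text \<open>Conjugate exponent t' = t/(t-1) (with 1' = \<infinity>), meaningful for t \<ge> 1.\<close>
definition conj_exp :: "(real^'n \<Rightarrow> real) \<Rightarrow> real^'n \<Rightarrow> ereal" where
  "conj_exp t x = (if t x = 1 then \<infinity> else ereal (t x / (t x - 1)))"

definition maximal :: "(real^'n \<Rightarrow> real) \<Rightarrow> real^'n \<Rightarrow> ennreal" where
  "maximal f x = (SUP Q \<in> {Q \<in> cubes. x \<in> Q}.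
      (\<integral>\<^sup>+ y \<in> Q. ennreal \<bar>f y\<bar> \<partial>lebesgue) / emeasure lebesgue Q)"

definition is_weight :: "(real^'n \<Rightarrow> real) \<Rightarrow> bool" where
  "is_weight w \<longleftrightarrow> w \<in> borel_measurable lebesgue \<and>
     (\<forall>K. compact K \<longrightarrow> set_integrable lebesgue K w) \<and> (AE x in lebesgue. 0 < w x)"

definition W_class :: "(real^'n \<Rightarrow> real) \<Rightarrow> (real^'n \<Rightarrow> real) set" where
  "W_class p = {w. is_weight w \<and>
     (\<exists>ps::real. 0 < ps \<and> ps < 1 \<and> ereal ps < p_minus p \<and>
        (\<forall>Q\<in>cubes.
           wnorm (\<lambda>x. ereal (p x / ps)) (\<lambda>x. w x powr ps) (indicator Q) < \<infinity> \<and>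
           wnorm (conj_exp (\<lambda>x. p x / ps)) (\<lambda>x. w x powr (- ps)) (indicator Q) < \<infinity>)) \<and>
     (\<exists>\<kappa>>1. \<exists>s>1. (AE x in lebesgue. 1 \<le> s * p x) \<and>
        (\<exists>C::real. \<forall>f \<in> borel_measurable lebesgue.
           wnorm (\<lambda>x. conj_exp (\<lambda>y. s * p y) x / ereal \<kappa>) (\<lambda>x. w x powr (- \<kappa> / s)) f < \<infinity> \<longrightarrow>
           vnorm (\<lambda>x. conj_exp (\<lambda>y. s * p y) x / ereal \<kappa>)
                 (\<lambda>x. maximal f x * ennreal \<bar>w x powr (- \<kappa> / s)\<bar>)
           \<le> ennreal C * wnorm (\<lambda>x. conj_exp (\<lambda>y. s * p y) x / ereal \<kappa>) (\<lambda>x. w x powr (- \<kappa> / s)) f))}"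

end

theory Submission
  imports Defs
begin

(* Write a for the norm of chi_2Q and pick mu in [a, 2a) for which the modular
   int_2Q (w/mu)^p lies between 4^(-p_+) and 1. The test function
   f = chi_2Q (w/mu)^(p kappa) then has norm at most 2^kappa mu^(-kappa/s) in the
   space with exponent (s p)'/kappa and weight w^(-kappa/s), while by a Jensen-type
   estimate its average over 2Q is at least (4^(-p_+)/(2 |2Q|))^kappa; so M f is at
   least that large on Q, and the boundedness of M in condition (ii) bounds the dual
   norm of chi_Q. Young's inequality for the exponents s p and (s p)', applied
   pointwise to w^(1/s) w^(-1/s) = 1 on Q, gives
   |Q| <= 4 ||chi_Q||_(p,w)^(1/s) ||chi_Q||_dual^(1/kappa), and hence mu <= C ||chi_Q||_(p,w).
   Condition (i) only serves to make ||chi_2Q||_(p,w) finite. *)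

section \<open>Cubes\<close>

lemma cube_eq_cbox: "cube c r = cbox (c - vec r) (c + vec r)"
  unfolding cube_def by (auto simp: mem_box_cart abs_le_iff algebra_simps)

lemma cube_in_sets_lebesgue [measurable]: "cube c r \<in> sets lebesgue"
  unfolding cube_eq_cbox by (intro fmeasurableD lmeasurable_cbox)

lemma emeasure_cube:
  fixes c :: "real^'n"
  assumes "r > 0"
  shows "emeasure lebesgue (cube c r) = ennreal ((2*r) ^ CARD('n))"
proof -
  have "c \<in> cbox (c - vec r) (c + vec r)"
    using assms by (simp add: mem_box_cart)
  then have "measure lborel (cbox (c - vec r) (c + vec r)) = (2*r) ^ CARD('n)"
    using content_cbox_cart by fastforce
  moreover have "emeasure lebesgue (cube c r) = ennreal (measure lborel (cbox (c - vec r) (c + vec r)))"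
    unfolding cube_eq_cbox using emeasure_lborel_cbox_finite
    by (simp add: emeasure_completion) (intro emeasure_eq_ennreal_measure, simp add: top.not_eq_extremum)
  ultimately show ?thesis by simp
qed

lemma cube_subset_double: "0 \<le> r \<Longrightarrow> cube c r \<subseteq> cube c (2 * r)"
  unfolding cube_def by (auto intro: order_trans)

lemma cube_in_cubes: "r > 0 \<Longrightarrow> cube c r \<in> cubes"
  unfolding cubes_def by blast

lemma average_le_maximal:
  assumes "Q \<in> cubes" "x \<in> Q"
  shows "(\<integral>\<^sup>+ y \<in> Q. ennreal \<bar>f y\<bar> \<partial>lebesgue) / emeasure lebesgue Q \<le> maximal f x"
  unfolding maximal_def using assms by (intro SUP_upper) auto

section \<open>Luxemburg norms\<close>

lemma modular_ennreal:
  fixes G :: "real^'n \<Rightarrow> real"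
  assumes "lam > 0" "\<And>x. 0 \<le> G x"
  shows "modular q (\<lambda>x. ennreal (G x)) lam =
    (\<integral>\<^sup>+x. (if q x = \<infinity> then 0 else ennreal ((G x / lam) powr real_of_ereal (q x))) \<partial>lebesgue)
    + Inf {c. AE x in lebesgue. q x = \<infinity> \<longrightarrow> ennreal (G x / lam) \<le> c}"
proof -
  have "ennreal (G x) / ennreal lam = ennreal (G x / lam)" for x
    using assms by (simp add: divide_ennreal)
  moreover have "epow (ennreal (G x / lam)) r = ennreal ((G x / lam) powr r)" for x r
    using assms by (simp add: epow_def)
  ultimately show ?thesis
    unfolding modular_def by (simp only:)
qed

lemma modular_finite_exponent:
  fixes G :: "real^'n \<Rightarrow> real"
  assumes "lam > 0" "\<And>x. 0 \<le> G x"
  shows "modular (\<lambda>x. ereal (p x)) (\<lambda>x. ennreal (G x)) lam =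
    (\<integral>\<^sup>+x. ennreal ((G x / lam) powr p x) \<partial>lebesgue)"
  using assms by (simp add: modular_ennreal bot_ennreal)

lemma modular_ennreal_le:
  fixes G :: "real^'n \<Rightarrow> real"
  assumes "lam > 0" "\<And>x. 0 \<le> G x" "0 \<le> b"
    and "(\<integral>\<^sup>+x. (if q x = \<infinity> then 0 else ennreal ((G x / lam) powr real_of_ereal (q x))) \<partial>lebesgue) \<le> a"
    and "AE x in lebesgue. q x = \<infinity> \<longrightarrow> G x / lam \<le> b"
  shows "modular q (\<lambda>x. ennreal (G x)) lam \<le> a + ennreal b"
proof -
  have "Inf {c. AE x in lebesgue. q x = \<infinity> \<longrightarrow> ennreal (G x / lam) \<le> c} \<le> ennreal b"
    using assms(5) by (intro Inf_lower) (auto elim!: eventually_mono intro: ennreal_leI)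
  then show ?thesis
    using assms by (simp add: modular_ennreal add_mono)
qed

lemma modular_ennreal_le_oneD:
  fixes G :: "real^'n \<Rightarrow> real"
  assumes "lam > 0" "\<And>x. 0 \<le> G x" and modular: "modular q (\<lambda>x. ennreal (G x)) lam \<le> 1"
  shows "(\<integral>\<^sup>+x. (if q x = \<infinity> then 0 else ennreal ((G x / lam) powr real_of_ereal (q x))) \<partial>lebesgue) \<le> 1"
    and "AE x in lebesgue. q x = \<infinity> \<longrightarrow> G x / lam \<le> 2"
proof -
  let ?S = "Inf {c. AE x in lebesgue. q x = \<infinity> \<longrightarrow> ennreal (G x / lam) \<le> c}"
  let ?I = "\<integral>\<^sup>+x. (if q x = \<infinity> then 0 else ennreal ((G x / lam) powr real_of_ereal (q x))) \<partial>lebesgue"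
  have sum_le: "?I + ?S \<le> 1"
    using modular assms(1,2) by (simp add: modular_ennreal)
  have "?I \<le> ?I + ?S"
    by simp
  then show "?I \<le> 1"
    using sum_le by (rule order_trans)
  have "?S \<le> ?I + ?S"
    by simp
  then have "?S \<le> 1"
    using sum_le by (rule order_trans)
  then have "?S < 2"
    by (rule le_less_trans) simp
  then obtain b where b: "AE x in lebesgue. q x = \<infinity> \<longrightarrow> ennreal (G x / lam) \<le> b" "b < 2"
    unfolding Inf_less_iff by blast
  show "AE x in lebesgue. q x = \<infinity> \<longrightarrow> G x / lam \<le> 2"
    using b(1)
  proof (rule eventually_mono, intro impI)
    fix x assume "q x = \<infinity> \<longrightarrow> ennreal (G x / lam) \<le> b" "q x = \<infinity>"
    then have "ennreal (G x / lam) \<le> b"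
      by simp
    then have "ennreal (G x / lam) < 2"
      using b(2) by (rule le_less_trans)
    then have "ennreal (G x / lam) < ennreal 2"
      by simp
    then show "G x / lam \<le> 2"
      by (simp add: ennreal_less_iff)
  qed
qed

lemma vnorm_le_ennreal: "lam > 0 \<Longrightarrow> modular q g lam \<le> 1 \<Longrightarrow> vnorm q g \<le> ennreal lam"
  unfolding vnorm_def by (rule Inf_lower) blast

lemma vnorm_lessE:
  assumes "vnorm q g < ennreal t"
  obtains lam where "lam > 0" "modular q g lam \<le> 1" "lam < t"
proof -
  from assms obtain lam where "lam > 0" "modular q g lam \<le> 1" "ennreal lam < ennreal t"
    unfolding vnorm_def Inf_less_iff by blast
  then show ?thesis using that by (simp add: ennreal_less_iff)
qed

lemma vnorm_greatest:
  "(\<And>lam. lam > 0 \<Longrightarrow> modular q g lam \<le> 1 \<Longrightarrow> t \<le> ennreal lam) \<Longrightarrow> t \<le> vnorm q g"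
  unfolding vnorm_def by (rule Inf_greatest) blast

lemma epow_mono: "a \<le> b \<Longrightarrow> 0 \<le> r \<Longrightarrow> epow a r \<le> epow b r"
  unfolding epow_def
  by (auto intro!: ennreal_leI powr_mono2 enn2real_mono simp: top.not_eq_extremum)

lemma modular_mono:
  assumes "AE x in lebesgue. 0 \<le> q x"
    and "AE x in lebesgue. g x / ennreal lam1 \<le> h x / ennreal lam2"
  shows "modular q g lam1 \<le> modular q h lam2"
  unfolding modular_def
proof (rule add_mono)
  show "(\<integral>\<^sup>+ x. (if q x = \<infinity> then 0 else epow (g x / ennreal lam1) (real_of_ereal (q x))) \<partial>lebesgue)
    \<le> (\<integral>\<^sup>+ x. (if q x = \<infinity> then 0 else epow (h x / ennreal lam2) (real_of_ereal (q x))) \<partial>lebesgue)"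
    using assms by (intro nn_integral_mono_AE, eventually_elim) (auto intro!: epow_mono real_of_ereal_pos)
  have "{c. AE x in lebesgue. q x = \<infinity> \<longrightarrow> h x / ennreal lam2 \<le> c}
      \<subseteq> {c. AE x in lebesgue. q x = \<infinity> \<longrightarrow> g x / ennreal lam1 \<le> c}"
    using assms(2) by (auto elim: eventually_elim2 intro: order_trans)
  then show "Inf {c. AE x in lebesgue. q x = \<infinity> \<longrightarrow> g x / ennreal lam1 \<le> c}
    \<le> Inf {c. AE x in lebesgue. q x = \<infinity> \<longrightarrow> h x / ennreal lam2 \<le> c}"
    by (rule Inf_superset_mono)
qed

lemma vnorm_mono:
  assumes "AE x in lebesgue. 0 \<le> q x" "AE x in lebesgue. g x \<le> h x"
  shows "vnorm q g \<le> vnorm q h"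
proof (rule vnorm_greatest)
  fix lam :: real assume "lam > 0" "modular q h lam \<le> 1"
  moreover have "modular q g lam \<le> modular q h lam"
    using assms by (intro modular_mono) (auto elim: eventually_mono intro: divide_right_mono_ennreal)
  ultimately show "vnorm q g \<le> ennreal lam"
    by (intro vnorm_le_ennreal) auto
qed

lemma vnorm_cmult_le:
  assumes "AE x in lebesgue. 0 \<le> q x" "c > 0" "AE x in lebesgue. ennreal c * g x \<le> h x"
  shows "ennreal c * vnorm q g \<le> vnorm q h"
proof (rule vnorm_greatest)
  fix lam :: real assume lam: "lam > 0" "modular q h lam \<le> 1"
  have "inverse (ennreal (lam / c)) = ennreal c * inverse (ennreal lam)"
    using lam(1) assms(2) divide_ennreal inverse_ennreal by (force simp: divide_ennreal_def)
  then have "g x / ennreal (lam / c) = ennreal c * g x / ennreal lam" for x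
    by (simp add: divide_ennreal_def mult_ac)
  then have "AE x in lebesgue. g x / ennreal (lam / c) \<le> h x / ennreal lam"
    using assms(3) by (auto elim!: eventually_mono intro: divide_right_mono_ennreal)
  then have "modular q g (lam / c) \<le> modular q h lam"
    by (intro modular_mono assms(1))
  then have "vnorm q g \<le> ennreal (lam / c)"
    using lam assms(2) by (intro vnorm_le_ennreal) auto
  then have "ennreal c * vnorm q g \<le> ennreal c * ennreal (lam / c)"
    by (rule mult_left_mono) simp
  also have "\<dots> = ennreal lam"
    using assms(2) lam(1) by (subst ennreal_mult[symmetric]) auto
  finally show "ennreal c * vnorm q g \<le> ennreal lam" .
qed

lemma wnorm_indicator_mono:
  assumes "E \<subseteq> F" "AE x in lebesgue. 0 \<le> q x"
  shows "wnorm q w (indicator E) \<le> wnorm q w (indicator F)"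
  unfolding wnorm_def using assms
  by (intro vnorm_mono) (auto simp: indicator_def intro!: ennreal_leI)

lemma vnorm_finiteE:
  assumes "vnorm q g < \<infinity>"
  obtains lam where "lam > 0" "modular q g lam \<le> 1"
proof -
  have "{ennreal lam | lam. lam > 0 \<and> modular q g lam \<le> 1} \<noteq> {}"
    using assms unfolding vnorm_def by (metis Inf_empty infinity_ennreal_def less_irrefl)
  then show ?thesis
    using that by blast
qed

lemma wnorm_indicator_finite_of_powr:
  assumes "0 < ps" "AE x in lebesgue. 0 < w x"
    and "wnorm (\<lambda>x. ereal (p x / ps)) (\<lambda>x. w x powr ps) (indicator E) < \<infinity>"
  shows "wnorm (\<lambda>x. ereal (p x)) w (indicator E) < \<infinity>"
proof -
  obtain lam where lam: "lam > 0"
    "modular (\<lambda>x. ereal (p x / ps)) (\<lambda>x. ennreal \<bar>indicator E x * w x powr ps\<bar>) lam \<le> 1"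
    using assms(3) unfolding wnorm_def by (rule vnorm_finiteE)
  have "modular (\<lambda>x. ereal (p x / ps)) (\<lambda>x. ennreal \<bar>indicator E x * w x powr ps\<bar>) lam
      = (\<integral>\<^sup>+x. ennreal ((\<bar>indicator E x * w x powr ps\<bar> / lam) powr (p x / ps)) \<partial>lebesgue)"
    using lam by (intro modular_finite_exponent) auto
  also have "\<dots> = (\<integral>\<^sup>+x. ennreal ((\<bar>indicator E x * w x\<bar> / lam powr (1/ps)) powr p x) \<partial>lebesgue)"
    using assms(2)
  proof (intro nn_integral_cong_AE, eventually_elim)
    case (elim x)
    then show ?case
      using lam(1) assms(1) by (cases "x \<in> E") (simp_all add: powr_divide powr_powr)
  qed
  also have "\<dots> = modular (\<lambda>x. ereal (p x)) (\<lambda>x. ennreal \<bar>indicator E x * w x\<bar>) (lam powr (1/ps))"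
    using lam(1) by (intro modular_finite_exponent[symmetric]) auto
  finally have "wnorm (\<lambda>x. ereal (p x)) w (indicator E) \<le> ennreal (lam powr (1/ps))"
    unfolding wnorm_def using lam by (intro vnorm_le_ennreal) auto
  then show ?thesis
    using ennreal_less_top le_less_trans unfolding infinity_ennreal_def by blast
qed

lemma powr_div_half_lower_bound:
  fixes y a m p P :: real
  assumes "y \<ge> 0" "a > 0" "a \<le> m" "m < 2*a" "0 < p" "p \<le> P"
  shows "4 powr (-P) * (y/(a/2)) powr p \<le> (y/m) powr p"
proof -
  have ratio: "1/4 \<le> (a/2)/m" "(a/2)/m \<le> 1"
    using assms by (auto simp: field_simps)
  have "4 powr (-P) = (1/4) powr P"
    by (simp add: powr_minus powr_divide inverse_eq_divide)
  also have "\<dots> \<le> ((a/2)/m) powr P"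
    using ratio assms by (intro powr_mono2) auto
  also have "\<dots> \<le> ((a/2)/m) powr p"
    using ratio assms by (intro powr_mono') auto
  finally have "4 powr (-P) * (y/(a/2)) powr p \<le> ((a/2)/m) powr p * (y/(a/2)) powr p"
    by (rule mult_right_mono) simp
  also have "\<dots> = (y/m) powr p"
    using assms by (simp add: powr_mult[symmetric])
  finally show ?thesis .
qed

lemma modular_near_vnormE:
  fixes G p :: "real^'n \<Rightarrow> real"
  assumes [measurable]: "G \<in> borel_measurable lebesgue" "p \<in> borel_measurable lebesgue"
    and "\<And>x. 0 \<le> G x" "\<And>x. 0 < p x" "AE x in lebesgue. p x \<le> P"
    and norm: "vnorm (\<lambda>x. ereal (p x)) (\<lambda>x. ennreal (G x)) = ennreal a" "a > 0"
  obtains mu where "a \<le> mu" "mu < 2*a"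
    "(\<integral>\<^sup>+x. ennreal ((G x / mu) powr p x) \<partial>lebesgue) \<le> 1"
    "ennreal (4 powr (-P)) \<le> (\<integral>\<^sup>+x. ennreal ((G x / mu) powr p x) \<partial>lebesgue)"
proof -
  let ?I = "\<lambda>mu. \<integral>\<^sup>+x. ennreal ((G x / mu) powr p x) \<partial>lebesgue"
  have modular_eq: "modular (\<lambda>x. ereal (p x)) (\<lambda>x. ennreal (G x)) mu = ?I mu" if "mu > 0" for mu
    using that assms(3) by (rule modular_finite_exponent)
  have "vnorm (\<lambda>x. ereal (p x)) (\<lambda>x. ennreal (G x)) < ennreal (2*a)"
    using norm by (simp add: ennreal_less_iff)
  then obtain mu where mu: "mu > 0" "?I mu \<le> 1" "mu < 2*a"
    by (rule vnorm_lessE) (simp add: modular_eq)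
  have "ennreal a \<le> ennreal mu"
    using mu norm(1)[symmetric] by (simp add: vnorm_le_ennreal modular_eq)
  then have "a \<le> mu"
    using mu(1) by (simp add: ennreal_le_iff)
  have "1 < ?I (a/2)"
  proof (rule ccontr)
    assume "\<not> 1 < ?I (a/2)"
    then have "ennreal a \<le> ennreal (a/2)"
      using norm by (simp add: vnorm_le_ennreal modular_eq not_less flip: norm(1))
    then show False
      using norm(2) by (simp add: ennreal_le_iff)
  qed
  then have "ennreal (4 powr (-P)) \<le> ennreal (4 powr (-P)) * ?I (a/2)"
    using mult_left_mono[of 1 "?I (a/2)" "ennreal (4 powr (-P))"] by simp
  also have "\<dots> = (\<integral>\<^sup>+x. ennreal (4 powr (-P) * (G x / (a/2)) powr p x) \<partial>lebesgue)"
    by (simp add: nn_integral_cmult[symmetric] ennreal_mult)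
  also have "\<dots> \<le> ?I mu"
    using assms(5)
  proof (intro nn_integral_mono_AE, eventually_elim)
    case (elim x)
    then show ?case
      using powr_div_half_lower_bound[of "G x" a mu "p x" P] assms(3,4) norm(2) \<open>a \<le> mu\<close> mu(3)
      by (auto intro: ennreal_leI)
  qed
  finally show ?thesis
    using that \<open>a \<le> mu\<close> mu by blast
qed

section \<open>Elementary inequalities\<close>

lemma young_inequality_unweighted:
  fixes x y r :: real
  assumes "x \<ge> 0" "y \<ge> 0" "r > 1"
  shows "x * y \<le> x powr r + y powr (r/(r-1))"
proof -
  have "x * y \<le> x powr r / r + y powr (r/(r-1)) / (r/(r-1))"
    using assms by (intro Youngs_inequality) (auto simp: field_simps)
  also have "\<dots> \<le> x powr r + y powr (r/(r-1))"
  proof (intro add_mono)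
    have dl: "\<And>a c::real. a \<ge> 0 \<Longrightarrow> c \<ge> 1 \<Longrightarrow> a / c \<le> a"
      by (simp add: divide_le_eq mult_le_cancel_left1)
    have "r/(r-1) \<ge> 1" using assms by (simp add: field_simps)
    then show "y powr (r / (r - 1)) / (r / (r - 1)) \<le> y powr (r / (r - 1))"
      by (intro dl) auto
    show "x powr r / r \<le> x powr r" using assms by (intro dl) auto
  qed
  finally show ?thesis .
qed

lemma le_add_powr_threshold:
  fixes F t k :: real
  assumes "F \<ge> 0" "t > 0" "k > 1"
  shows "F \<le> t + t powr (1-k) * F powr k"
proof (cases "F \<le> t")
  case True then show ?thesis using assms by (simp add: add_increasing2)
next
  case False
  then have "F = F powr k * F powr (1-k)" using assms by (simp add: powr_add[symmetric])
  also have "\<dots> \<le> F powr k * t powr (1-k)"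
    using False assms by (intro mult_left_mono powr_mono2') auto
  finally show ?thesis using assms by (simp add: mult.commute add_increasing)
qed

lemma dual_test_powr_le_half:
  fixes w m p s k :: real
  assumes "w>0" "m>0" "s>0" "k>0" "s*p>1"
  shows "((((w/m) powr p) powr k * w powr (-k/s)) / (2 powr k * m powr (-k/s))) powr ((s*p/(s*p-1))/k)
         \<le> 1/2 * (w/m) powr p"
proof -
  define X where "X = (((w/m) powr p) powr k * w powr (-k/s)) / (2 powr k * m powr (-k/s))"
  define L where "L = ln w - ln m"
  have Xpos: "X > 0" using assms by (simp add: X_def)
  have lnX: "ln X = k*(p - 1/s)*L - k*ln 2"
    using assms unfolding X_def L_def
    by (simp add: ln_mult ln_div ln_powr field_simps)
  have "X powr ((s*p/(s*p-1))/k) = exp (((s*p/(s*p-1))/k) * ln X)"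
    using Xpos by (simp add: powr_def)
  also have "((s*p/(s*p-1))/k) * ln X = p*L - (s*p/(s*p-1))*ln 2"
    unfolding lnX using assms by (simp add: field_simps)
  also have "exp (p*L - (s*p/(s*p-1))*ln 2) \<le> exp (p*L - ln 2)"
  proof -
    have "1 \<le> s*p/(s*p-1)" using assms by (simp add: field_simps)
    then have "1 * ln 2 \<le> (s*p/(s*p-1)) * ln 2"
      by (rule mult_right_mono) simp
    then show ?thesis by simp
  qed
  also have "exp (p*L - ln 2) = 1/2 * (w/m) powr p"
    using assms by (simp add: L_def powr_def exp_diff ln_div)
  finally show ?thesis unfolding X_def .
qed

lemma dual_test_le_half_critical:
  fixes w m p s k :: real
  assumes "w>0" "m>0" "s>0" "k\<ge>1" "s*p=1"
  shows "(((w/m) powr p) powr k * w powr (-k/s)) / (2 powr k * m powr (-k/s)) \<le> 1/2"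
proof -
  have p: "p = 1/s" using assms by (simp add: field_simps)
  have "(((w/m) powr p) powr k * w powr (-k/s)) / (2 powr k * m powr (-k/s)) = 2 powr (-k)"
    using assms unfolding p by (simp add: powr_powr powr_divide powr_minus field_simps)
  also have "\<dots> \<le> 2 powr (-1)" using assms by (intro powr_mono) auto
  finally show ?thesis by (simp add: powr_minus)
qed

lemma one_le_holder_pointwise:
  fixes w a l p s k :: real
  assumes "w>0" "a>0" "l>0" "s>0" "k>0" "s*p>1"
  shows "1 \<le> 2 * a powr (1/s) * l powr (1/k) * ((w/a) powr p + (w powr (-k/s)/l) powr ((s*p/(s*p-1))/k))"
proof -
  define X where "X = (w/a) powr (1/s)"
  define Y where "Y = (w powr (-k/s)/l) powr (1/k)"
  have X0: "X \<ge> 0" "Y \<ge> 0" unfolding X_def Y_def by auto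
  have Xr: "X powr (s*p) = (w/a) powr p" unfolding X_def using assms by (simp add: powr_powr)
  have Yr: "Y powr (s*p/(s*p-1)) = (w powr (-k/s)/l) powr ((s*p/(s*p-1))/k)"
    unfolding Y_def using assms by (simp add: powr_powr mult_ac)
  have X1: "X = w powr (1/s) / a powr (1/s)" unfolding X_def using assms by (simp add: powr_divide)
  have Y1: "Y = w powr (-1/s) / l powr (1/k)" unfolding Y_def using assms
    by (simp add: powr_divide powr_powr)
  have ww: "w powr (1/s) * w powr (-1/s) = 1" using assms by (simp add: powr_add[symmetric])
  have c1: "a powr (1/s) * l powr (1/k) * (X * Y) = 1"
    unfolding X1 Y1 using assms ww by (simp add: field_simps)
  have "X * Y \<le> X powr (s*p) + Y powr (s*p/(s*p-1))"
    using X0 assms by (intro young_inequality_unweighted) auto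
  then have "a powr (1/s) * l powr (1/k) * (X * Y) \<le> a powr (1/s) * l powr (1/k) * (X powr (s*p) + Y powr (s*p/(s*p-1)))"
    by (intro mult_left_mono) auto
  then have "1 \<le> a powr (1/s) * l powr (1/k) * ((w/a) powr p + (w powr (-k/s)/l) powr ((s*p/(s*p-1))/k))"
    by (simp only: c1 Xr Yr)
  also have "\<dots> \<le> 2 * a powr (1/s) * l powr (1/k) * ((w/a) powr p + (w powr (-k/s)/l) powr ((s*p/(s*p-1))/k))"
    by (intro mult_right_mono) auto
  finally show ?thesis .
qed

lemma one_le_holder_pointwise_critical:
  fixes w a l p s k :: real
  assumes "w>0" "a>0" "l>0" "s>0" "k\<ge>1" "s*p=1" "w powr (-k/s)/l \<le> 2"
  shows "1 \<le> 2 * a powr (1/s) * l powr (1/k) * (w/a) powr p"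
proof -
  have p: "p = 1/s" using assms by (simp add: field_simps)
  have e: "2 * a powr (1/s) * l powr (1/k) * (w/a) powr p = 2 * l powr (1/k) * w powr (1/s)"
    unfolding p using assms by (simp add: powr_divide)
  have "w powr (-k/s) \<le> 2 * l" using assms by (simp add: divide_le_eq)
  then have "(w powr (-k/s)) powr (1/k) \<le> (2*l) powr (1/k)"
    using assms by (intro powr_mono2) auto
  also have "\<dots> = 2 powr (1/k) * l powr (1/k)" using assms by (simp add: powr_mult)
  also have "\<dots> \<le> 2 * l powr (1/k)"
  proof -
    have "2 powr (1/k) \<le> 2 powr 1" using assms by (intro powr_mono) auto
    then show ?thesis by (intro mult_right_mono) auto
  qed
  finally have "w powr (-1/s) \<le> 2 * l powr (1/k)" using assms by (simp add: powr_powr)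
  then have "w powr (-1/s) * w powr (1/s) \<le> 2 * l powr (1/k) * w powr (1/s)"
    by (intro mult_right_mono) auto
  moreover have "w powr (-1/s) * w powr (1/s) = 1" using assms by (simp add: powr_add[symmetric])
  ultimately show ?thesis unfolding e by simp
qed

lemma nn_integral_powr_lower_bound:
  fixes F :: "'a \<Rightarrow> real"
  assumes [measurable]: "F \<in> borel_measurable M" "E \<in> sets M"
    and "\<And>x. 0 \<le> F x" "\<And>x. x \<notin> E \<Longrightarrow> F x = 0"
    and "emeasure M E = ennreal m" "m > 0" "k > 1" "\<delta> > 0"
    and "ennreal \<delta> \<le> (\<integral>\<^sup>+x. F x \<partial>M)"
  shows "ennreal ((\<delta> / (2*m)) powr k * m) \<le> (\<integral>\<^sup>+x. F x powr k \<partial>M)"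
proof -
  define t where "t = \<delta> / (2*m)"
  have t: "t > 0" "\<delta> = 2 * t * m"
    using assms(6,8) by (auto simp: t_def)
  let ?I = "\<integral>\<^sup>+x. F x powr k \<partial>M"
  have "ennreal \<delta> \<le> (\<integral>\<^sup>+x. ennreal t * indicator E x + ennreal (t powr (1-k)) * ennreal (F x powr k) \<partial>M)"
  proof (rule order_trans[OF assms(9) nn_integral_mono])
    fix x
    have "F x \<le> t + t powr (1-k) * F x powr k"
      using le_add_powr_threshold[of "F x" t k] assms(3,7) t by simp
    then have "ennreal (F x) \<le> ennreal (t + t powr (1-k) * F x powr k)"
      by (rule ennreal_leI)
    also have "\<dots> = ennreal t + ennreal (t powr (1-k)) * ennreal (F x powr k)"
      using t by (subst ennreal_plus) (auto simp: ennreal_mult)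
    finally have "ennreal (F x) \<le> ennreal t + ennreal (t powr (1-k)) * ennreal (F x powr k)" .
    then show "ennreal (F x) \<le> ennreal t * indicator E x + ennreal (t powr (1-k)) * ennreal (F x powr k)"
      using assms(4) by (cases "x \<in> E") auto
  qed
  also have "\<dots> = ennreal t * emeasure M E + ennreal (t powr (1-k)) * ?I"
    by (simp add: nn_integral_add nn_integral_cmult)
  also have "\<dots> = ennreal (t * m) + ennreal (t powr (1-k)) * ?I"
    using assms(5,6) t by (simp add: ennreal_mult)
  finally have bound: "ennreal \<delta> \<le> ennreal (t * m) + ennreal (t powr (1-k)) * ?I" .
  show ?thesis
  proof (cases "?I = \<infinity>")
    case False
    then obtain I where I: "I \<ge> 0" "?I = ennreal I"
      using less_top_ennreal top.not_eq_extremum unfolding infinity_ennreal_def by blast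
    have "ennreal (t * m) + ennreal (t powr (1-k)) * ?I = ennreal (t * m + t powr (1-k) * I)"
      using I t assms(6) by (subst ennreal_plus) (auto simp: ennreal_mult)
    then have "ennreal \<delta> \<le> ennreal (t * m + t powr (1-k) * I)"
      using bound by simp
    then have "\<delta> \<le> t * m + t powr (1-k) * I"
      using I t assms(6) by (subst (asm) ennreal_le_iff) auto
    then have "t * m \<le> t powr (1-k) * I"
      using t(2) by (simp add: mult.commute)
    have "t powr k * m = t powr (k-1) * (t * m)"
      using t by (simp add: powr_diff)
    also have "\<dots> \<le> t powr (k-1) * (t powr (1-k) * I)"
      using \<open>t * m \<le> t powr (1-k) * I\<close> by (rule mult_left_mono) simp
    also have "\<dots> = I"
      using t by (simp add: powr_add[symmetric] mult.assoc[symmetric])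
    finally show ?thesis
      using I unfolding t_def by (simp add: ennreal_leI)
  qed simp
qed

section \<open>The dual exponent and the doubling estimate\<close>

definition dual_exp :: "real \<Rightarrow> real \<Rightarrow> (real^'n \<Rightarrow> real) \<Rightarrow> real^'n \<Rightarrow> ereal" where
  "dual_exp s \<kappa> p = (\<lambda>x. conj_exp (\<lambda>y. s * p y) x / ereal \<kappa>)"

definition maximal_bounded :: "(real^'n \<Rightarrow> ereal) \<Rightarrow> (real^'n \<Rightarrow> real) \<Rightarrow> real \<Rightarrow> bool" where
  "maximal_bounded q v C \<longleftrightarrow> (\<forall>f\<in>borel_measurable lebesgue. wnorm q v f < \<infinity> \<longrightarrow>
      vnorm q (\<lambda>x. maximal f x * ennreal \<bar>v x\<bar>) \<le> ennreal C * wnorm q v f)"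

lemma maximal_bounded_mono:
  fixes q :: "real^'n \<Rightarrow> ereal"
  assumes "maximal_bounded q v C" "C \<le> C'"
  shows "maximal_bounded q v C'"
  unfolding maximal_bounded_def
proof (intro ballI impI)
  fix f :: "real^'n \<Rightarrow> real"
  assume "f \<in> borel_measurable lebesgue" "wnorm q v f < \<infinity>"
  then have "vnorm q (\<lambda>x. maximal f x * ennreal \<bar>v x\<bar>) \<le> ennreal C * wnorm q v f"
    using assms(1) by (simp add: maximal_bounded_def)
  also have "\<dots> \<le> ennreal C' * wnorm q v f"
    using assms(2) by (intro mult_right_mono ennreal_leI) auto
  finally show "vnorm q (\<lambda>x. maximal f x * ennreal \<bar>v x\<bar>) \<le> ennreal C' * wnorm q v f" .
qed

(* q and v are the exponent (s p)'/kappa and the weight w^(-kappa/s) of condition (ii). *)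
locale dual_exponent =
  fixes p w :: "real^'n \<Rightarrow> real" and s \<kappa> :: real
  assumes p_measurable [measurable]: "p \<in> borel_measurable lebesgue"
    and p_pos: "\<And>x. 0 < p x"
    and w_measurable [measurable]: "w \<in> borel_measurable lebesgue"
    and w_pos: "AE x in lebesgue. 0 < w x"
    and s_gt_1: "1 < s" and kappa_gt_1: "1 < \<kappa>"
    and sp_ge_1: "AE x in lebesgue. 1 \<le> s * p x"
begin

abbreviation q :: "real^'n \<Rightarrow> ereal" where
  "q \<equiv> dual_exp s \<kappa> p"

abbreviation v :: "real^'n \<Rightarrow> real" where
  "v \<equiv> \<lambda>x. w x powr (- \<kappa> / s)"

lemma q_eq_infinity_iff: "q x = \<infinity> \<longleftrightarrow> s * p x = 1"
  using kappa_gt_1 by (auto simp: dual_exp_def conj_exp_def)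

lemma q_eq_ereal: "s * p x \<noteq> 1 \<Longrightarrow> q x = ereal ((s * p x / (s * p x - 1)) / \<kappa>)"
  using kappa_gt_1 by (auto simp: dual_exp_def conj_exp_def)

lemma q_nonneg: "AE x in lebesgue. 0 \<le> q x"
  using sp_ge_1
proof eventually_elim
  case (elim x)
  then show ?case
    using kappa_gt_1 q_eq_infinity_iff[of x] q_eq_ereal[of x] by (cases "s * p x = 1") auto
qed

lemma wnorm_dual_test_function_le:
  assumes [measurable]: "E \<in> sets lebesgue" and "mu > 0"
    and modular_le_1: "(\<integral>\<^sup>+x. ennreal ((\<bar>indicator E x * w x\<bar> / mu) powr p x) \<partial>lebesgue) \<le> 1"
  shows "wnorm q v (\<lambda>x. ((\<bar>indicator E x * w x\<bar> / mu) powr p x) powr \<kappa>)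
    \<le> ennreal (2 powr \<kappa> * mu powr (-\<kappa>/s))"
proof -
  define F where "F x = (\<bar>indicator E x * w x\<bar> / mu) powr p x" for x
  define \<beta> where "\<beta> = 2 powr \<kappa> * mu powr (-\<kappa>/s)"
  have [measurable]: "F \<in> borel_measurable lebesgue"
    unfolding F_def by measurable
  have \<beta>: "\<beta> > 0"
    using \<open>mu > 0\<close> by (simp add: \<beta>_def)
  have F_in: "F x = (w x / mu) powr p x" if "x \<in> E" "0 < w x" for x
    using that by (simp add: F_def)
  have F_out: "F x = 0" if "x \<notin> E" for x
    using that by (simp add: F_def)
  have F_nonneg: "0 \<le> F x" for x
    by (simp add: F_def)
  have integrand_le: "(\<bar>F x powr \<kappa> * v x\<bar> / \<beta>) powr real_of_ereal (q x) \<le> 1/2 * F x"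
    if "0 < w x" "1 < s * p x" for x
  proof (cases "x \<in> E")
    case True
    then show ?thesis
      using dual_test_powr_le_half[of "w x" mu s \<kappa> "p x"] that \<open>mu > 0\<close> s_gt_1 kappa_gt_1
      by (simp add: F_in q_eq_ereal \<beta>_def)
  next
    case False
    then show ?thesis
      using that kappa_gt_1 by (simp add: F_out q_eq_ereal)
  qed
  have "(\<integral>\<^sup>+x. (if q x = \<infinity> then 0 else ennreal ((\<bar>F x powr \<kappa> * v x\<bar> / \<beta>) powr real_of_ereal (q x))) \<partial>lebesgue)
      \<le> (\<integral>\<^sup>+x. ennreal (1/2 * F x) \<partial>lebesgue)"
    using w_pos sp_ge_1
  proof (intro nn_integral_mono_AE, eventually_elim)
    case (elim x)
    then show ?case
      using integrand_le[of x] by (cases "s * p x = 1") (auto simp: q_eq_infinity_iff intro!: ennreal_leI)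
  qed
  also have "\<dots> = (\<integral>\<^sup>+x. ennreal (1/2) * ennreal (F x) \<partial>lebesgue)"
    by (rule nn_integral_cong, rule ennreal_mult) (simp_all add: F_nonneg)
  also have "\<dots> = ennreal (1/2) * (\<integral>\<^sup>+x. ennreal (F x) \<partial>lebesgue)"
    by (rule nn_integral_cmult) measurable
  also have "\<dots> \<le> ennreal (1/2)"
    using mult_left_mono[OF modular_le_1, of "ennreal (1/2)"] by (simp add: F_def)
  finally have integral_part: "(\<integral>\<^sup>+x. (if q x = \<infinity> then 0 else ennreal ((\<bar>F x powr \<kappa> * v x\<bar> / \<beta>) powr real_of_ereal (q x))) \<partial>lebesgue)
      \<le> ennreal (1/2)" .
  have critical_le: "\<bar>F x powr \<kappa> * v x\<bar> / \<beta> \<le> 1/2" if "0 < w x" "s * p x = 1" for x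
  proof (cases "x \<in> E")
    case True
    then show ?thesis
      using dual_test_le_half_critical[of "w x" mu s \<kappa> "p x"] that \<open>mu > 0\<close> s_gt_1 kappa_gt_1
      by (simp add: F_in \<beta>_def)
  next
    case False
    then show ?thesis
      using kappa_gt_1 by (simp add: F_out)
  qed
  have "AE x in lebesgue. q x = \<infinity> \<longrightarrow> \<bar>F x powr \<kappa> * v x\<bar> / \<beta> \<le> 1/2"
    using w_pos
  proof (rule eventually_mono, intro impI)
    fix x assume "0 < w x" "q x = \<infinity>"
    then show "\<bar>F x powr \<kappa> * v x\<bar> / \<beta> \<le> 1/2"
      using critical_le q_eq_infinity_iff by simp
  qed
  then have "modular q (\<lambda>x. ennreal \<bar>F x powr \<kappa> * v x\<bar>) \<beta> \<le> ennreal (1/2) + ennreal (1/2)"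
    using \<beta> integral_part by (intro modular_ennreal_le) auto
  also have "\<dots> = 1"
    by (subst ennreal_plus[symmetric]) auto
  finally show ?thesis
    unfolding wnorm_def F_def[symmetric] \<beta>_def[symmetric] using \<beta> by (rule vnorm_le_ennreal[rotated])
qed

lemma emeasure_le_holder:
  assumes [measurable]: "E \<in> sets lebesgue" and "\<alpha> > 0" "lam > 0"
    and p_modular: "(\<integral>\<^sup>+x. ennreal ((\<bar>indicator E x * w x\<bar> / \<alpha>) powr p x) \<partial>lebesgue) \<le> 1"
    and q_modular: "modular q (\<lambda>x. ennreal \<bar>indicator E x * v x\<bar>) lam \<le> 1"
  shows "emeasure lebesgue E \<le> ennreal (4 * \<alpha> powr (1/s) * lam powr (1/\<kappa>))"
proof -
  define G where "G x = \<bar>indicator E x * v x\<bar>" for x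
  define X where "X x = (if s * p x = 1 then 0 else ennreal ((G x / lam) powr ((s * p x / (s * p x - 1)) / \<kappa>)))" for x
  define Y where "Y x = ennreal ((\<bar>indicator E x * w x\<bar> / \<alpha>) powr p x)" for x
  define c where "c = 2 * \<alpha> powr (1/s) * lam powr (1/\<kappa>)"
  have [measurable]: "X \<in> borel_measurable lebesgue" "Y \<in> borel_measurable lebesgue"
    unfolding X_def Y_def G_def by measurable
  have c: "c > 0"
    using assms(2,3) by (simp add: c_def)
  have q_integral: "(\<integral>\<^sup>+x. (if q x = \<infinity> then 0 else ennreal ((G x / lam) powr real_of_ereal (q x))) \<partial>lebesgue) \<le> 1"
    and q_critical: "AE x in lebesgue. q x = \<infinity> \<longrightarrow> G x / lam \<le> 2"
    using modular_ennreal_le_oneD[of lam G q] \<open>lam > 0\<close> q_modular by (auto simp: G_def)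
  have "(if q x = \<infinity> then 0 else ennreal ((G x / lam) powr real_of_ereal (q x))) = X x" for x
    by (cases "s * p x = 1") (simp_all add: X_def q_eq_infinity_iff q_eq_ereal)
  then have X_le: "(\<integral>\<^sup>+x. X x \<partial>lebesgue) \<le> 1"
    using q_integral by simp
  have critical: "AE x in lebesgue. s * p x = 1 \<longrightarrow> G x / lam \<le> 2"
    using q_critical by (simp add: q_eq_infinity_iff)
  have "AE x in lebesgue. indicator E x \<le> ennreal c * (Y x + X x)"
    using w_pos sp_ge_1 critical
  proof eventually_elim
    case (elim x)
    show ?case
    proof (cases "x \<in> E")
      case True
      have Gx: "G x = w x powr (-\<kappa>/s)" and Yx: "Y x = ennreal ((w x / \<alpha>) powr p x)"
        using True elim(1) by (simp_all add: G_def Y_def)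
      show ?thesis
      proof (cases "s * p x = 1")
        case True
        then have "1 \<le> c * (w x / \<alpha>) powr p x"
          using one_le_holder_pointwise_critical[of "w x" \<alpha> lam s \<kappa> "p x"] elim assms(2,3) s_gt_1 kappa_gt_1
          by (simp add: c_def Gx)
        then show ?thesis
          using \<open>x \<in> E\<close> True c by (simp add: X_def Yx ennreal_mult[symmetric] ennreal_leI)
      next
        case False
        then have "1 \<le> c * ((w x / \<alpha>) powr p x + (G x / lam) powr ((s * p x / (s * p x - 1)) / \<kappa>))"
          using one_le_holder_pointwise[of "w x" \<alpha> lam s \<kappa> "p x"] elim assms(2,3) s_gt_1 kappa_gt_1
          by (simp add: c_def Gx)
        then show ?thesis
          using \<open>x \<in> E\<close> False c
          by (simp add: X_def Yx ennreal_mult[symmetric] ennreal_plus[symmetric] ennreal_leI del: ennreal_plus)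
      qed
    qed simp
  qed
  then have "emeasure lebesgue E \<le> (\<integral>\<^sup>+x. ennreal c * (Y x + X x) \<partial>lebesgue)"
    by (simp add: nn_integral_mono_AE flip: nn_integral_indicator)
  also have "\<dots> = ennreal c * ((\<integral>\<^sup>+x. Y x \<partial>lebesgue) + (\<integral>\<^sup>+x. X x \<partial>lebesgue))"
    by (simp add: nn_integral_cmult nn_integral_add)
  also have "\<dots> \<le> ennreal c * 2"
    using p_modular X_le unfolding Y_def one_add_one[symmetric] by (intro mult_left_mono add_mono) auto
  also have "\<dots> = ennreal (2 * c)"
    using c by (simp add: ennreal_mult mult.commute)
  also have "\<dots> = ennreal (4 * \<alpha> powr (1/s) * lam powr (1/\<kappa>))"
    by (simp add: c_def)
  finally show ?thesis .
qed

lemma wnorm_indicator_ge_holder: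
  assumes [measurable]: "E \<in> sets lebesgue"
    and "emeasure lebesgue E = ennreal m" "0 \<le> m" "0 < l"
    and "wnorm q v (indicator E) < ennreal (l powr \<kappa>)"
  shows "ennreal ((m / (4 * l)) powr s) \<le> wnorm (\<lambda>x. ereal (p x)) w (indicator E)"
proof -
  obtain lam where lam: "lam > 0" "modular q (\<lambda>x. ennreal \<bar>indicator E x * v x\<bar>) lam \<le> 1"
      "lam < l powr \<kappa>"
    using assms(5) unfolding wnorm_def by (rule vnorm_lessE)
  have "lam powr (1/\<kappa>) \<le> l"
    using lam \<open>l > 0\<close> kappa_gt_1 powr_mono2[of "1/\<kappa>" lam "l powr \<kappa>"] by (simp add: powr_powr)
  show ?thesis
    unfolding wnorm_def
  proof (rule vnorm_greatest)
    fix \<alpha> :: real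
    assume "\<alpha> > 0" "modular (\<lambda>x. ereal (p x)) (\<lambda>x. ennreal \<bar>indicator E x * w x\<bar>) \<alpha> \<le> 1"
    then have "(\<integral>\<^sup>+x. ennreal ((\<bar>indicator E x * w x\<bar> / \<alpha>) powr p x) \<partial>lebesgue) \<le> 1"
      by (simp add: modular_finite_exponent)
    then have "ennreal m \<le> ennreal (4 * \<alpha> powr (1/s) * lam powr (1/\<kappa>))"
      using emeasure_le_holder[OF assms(1) \<open>\<alpha> > 0\<close> lam(1)] lam(2) assms(2) by simp
    then have "m \<le> 4 * \<alpha> powr (1/s) * lam powr (1/\<kappa>)"
      by (subst (asm) ennreal_le_iff) auto
    also have "\<dots> \<le> 4 * \<alpha> powr (1/s) * l"
      using \<open>lam powr (1/\<kappa>) \<le> l\<close> by (intro mult_left_mono) auto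
    finally have "m \<le> 4 * \<alpha> powr (1/s) * l" .
    then have "m / (4 * l) \<le> \<alpha> powr (1/s)"
      using \<open>l > 0\<close> by (simp add: field_simps)
    then have "(m / (4 * l)) powr s \<le> (\<alpha> powr (1/s)) powr s"
      using assms(3) \<open>l > 0\<close> s_gt_1 by (intro powr_mono2) auto
    then show "ennreal ((m / (4 * l)) powr s) \<le> ennreal \<alpha>"
      using \<open>\<alpha> > 0\<close> s_gt_1 by (intro ennreal_leI) (simp add: powr_powr)
  qed
qed

lemma wnorm_dual_indicator_le:
  assumes maximal: "maximal_bounded q v C"
    and "0 < C" "0 < r" "E \<subseteq> cube c r" "0 < mu" "0 < \<delta>"
    and modular_le_1: "(\<integral>\<^sup>+x. ennreal ((\<bar>indicator (cube c r) x * w x\<bar> / mu) powr p x) \<partial>lebesgue) \<le> 1"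
    and modular_ge: "ennreal \<delta> \<le> (\<integral>\<^sup>+x. ennreal ((\<bar>indicator (cube c r) x * w x\<bar> / mu) powr p x) \<partial>lebesgue)"
  shows "wnorm q v (indicator E) \<le> ennreal (C * (4 * (2*r) ^ CARD('n) / \<delta> * mu powr (-1/s)) powr \<kappa>)"
proof -
  define Q where "Q = cube c r"
  define m :: real where "m = (2*r) ^ CARD('n)"
  define F where "F x = (\<bar>indicator Q x * w x\<bar> / mu) powr p x" for x
  define f where "f x = F x powr \<kappa>" for x
  define \<beta> where "\<beta> = 2 powr \<kappa> * mu powr (-\<kappa>/s)"
  define T where "T = (\<delta> / (2*m)) powr \<kappa>"
  have [measurable]: "F \<in> borel_measurable lebesgue" "f \<in> borel_measurable lebesgue"
    unfolding f_def F_def Q_def by measurable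
  have m: "m > 0" and T: "T > 0" and \<beta>: "\<beta> > 0"
    using \<open>0 < r\<close> \<open>0 < \<delta>\<close> \<open>0 < mu\<close> by (simp_all add: m_def T_def \<beta>_def)
  have Q_measure: "emeasure lebesgue Q = ennreal m"
    unfolding Q_def m_def using \<open>0 < r\<close> by (rule emeasure_cube)
  have f_norm: "wnorm q v f \<le> ennreal \<beta>"
    unfolding f_def F_def \<beta>_def Q_def using \<open>0 < mu\<close> modular_le_1 by (intro wnorm_dual_test_function_le) auto
  then have "wnorm q v f < \<infinity>"
    using ennreal_less_top le_less_trans unfolding infinity_ennreal_def by blast
  then have "vnorm q (\<lambda>x. maximal f x * ennreal \<bar>v x\<bar>) \<le> ennreal C * wnorm q v f"
    using maximal by (simp add: maximal_bounded_def)
  also have "\<dots> \<le> ennreal (C * \<beta>)"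
    using mult_left_mono[OF f_norm, of "ennreal C"] \<open>0 < C\<close> \<beta> by (simp add: ennreal_mult)
  finally have maximal_bound: "vnorm q (\<lambda>x. maximal f x * ennreal \<bar>v x\<bar>) \<le> ennreal (C * \<beta>)" .
  have "ennreal (T * m) \<le> (\<integral>\<^sup>+x. f x \<partial>lebesgue)"
    unfolding T_def f_def using kappa_gt_1 m \<open>0 < \<delta>\<close> Q_measure modular_ge
    by (intro nn_integral_powr_lower_bound[where E = Q]) (auto simp: F_def Q_def)
  then have maximal_lower: "ennreal T \<le> maximal f x" if "x \<in> Q" for x
  proof -
    have integral_Q: "(\<integral>\<^sup>+y\<in>Q. ennreal \<bar>f y\<bar> \<partial>lebesgue) = (\<integral>\<^sup>+y. f y \<partial>lebesgue)"
      by (intro nn_integral_cong) (auto simp: f_def F_def indicator_def)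
    have "ennreal T = ennreal (T * m) / ennreal m"
      using m T by (subst divide_ennreal) auto
    also have "\<dots> \<le> (\<integral>\<^sup>+y\<in>Q. ennreal \<bar>f y\<bar> \<partial>lebesgue) / emeasure lebesgue Q"
      using \<open>ennreal (T * m) \<le> _\<close> Q_measure integral_Q by (simp add: divide_right_mono_ennreal)
    also have "\<dots> \<le> maximal f x"
      using \<open>0 < r\<close> that unfolding Q_def by (intro average_le_maximal cube_in_cubes)
    finally show ?thesis .
  qed
  have "ennreal T * wnorm q v (indicator E) \<le> vnorm q (\<lambda>x. maximal f x * ennreal \<bar>v x\<bar>)"
    unfolding wnorm_def
  proof (intro vnorm_cmult_le q_nonneg T AE_I2)
    fix x
    show "ennreal T * ennreal \<bar>indicator E x * v x\<bar> \<le> maximal f x * ennreal \<bar>v x\<bar>"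
      using maximal_lower[of x] \<open>E \<subseteq> cube c r\<close>
      by (cases "x \<in> E") (auto simp: Q_def intro!: mult_right_mono)
  qed
  then have "ennreal T * wnorm q v (indicator E) \<le> ennreal (C * \<beta>)"
    using maximal_bound by (rule order_trans)
  then have "wnorm q v (indicator E) * ennreal T / ennreal T \<le> ennreal (C * \<beta>) / ennreal T"
    by (simp add: mult.commute divide_right_mono_ennreal)
  then have "wnorm q v (indicator E) \<le> ennreal (C * \<beta> / T)"
    using T \<open>0 < C\<close> \<beta> by (simp add: ennreal_mult_divide_eq divide_ennreal)
  also have "C * \<beta> / T = C * (4 * m / \<delta> * mu powr (-1/s)) powr \<kappa>"
    using m \<open>0 < \<delta>\<close> \<open>0 < mu\<close> s_gt_1 powr_mult[of 2 2 \<kappa>]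
    by (simp add: \<beta>_def T_def powr_mult powr_divide powr_powr field_simps)
  finally show ?thesis
    unfolding m_def .
qed

lemma wnorm_double_cube_le:
  assumes maximal: "maximal_bounded q v C"
    and "0 < C" "AE x in lebesgue. p x \<le> P" "0 < r"
    and finite: "wnorm (\<lambda>x. ereal (p x)) w (indicator (cube c (2*r))) < \<infinity>"
  shows "wnorm (\<lambda>x. ereal (p x)) w (indicator (cube c (2*r)))
    \<le> ennreal ((16 * (2*C) powr (1/\<kappa>) * 2 ^ CARD('n) * 4 powr P) powr s)
      * wnorm (\<lambda>x. ereal (p x)) w (indicator (cube c r))"
    (is "?A (cube c (2*r)) \<le> ennreal (?K powr s) * _")
proof (cases "?A (cube c (2*r)) = 0")
  case False
  then obtain a where a: "?A (cube c (2*r)) = ennreal a" "a > 0"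
    using finite by (cases "?A (cube c (2*r))") (auto simp: ennreal_eq_0_iff less_le)
  define \<delta> :: real where "\<delta> = 4 powr (-P)"
  define m :: real where "m = (2*r) ^ CARD('n)"
  have m: "m > 0" and \<delta>: "\<delta> > 0"
    using \<open>0 < r\<close> by (simp_all add: m_def \<delta>_def)
  have cube_measure: "emeasure lebesgue (cube c r) = ennreal m"
    unfolding m_def using \<open>0 < r\<close> by (rule emeasure_cube)
  obtain mu where mu: "a \<le> mu" "mu < 2*a"
      "(\<integral>\<^sup>+x. ennreal ((\<bar>indicator (cube c (2*r)) x * w x\<bar> / mu) powr p x) \<partial>lebesgue) \<le> 1"
      "ennreal \<delta> \<le> (\<integral>\<^sup>+x. ennreal ((\<bar>indicator (cube c (2*r)) x * w x\<bar> / mu) powr p x) \<partial>lebesgue)"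
    by (rule modular_near_vnormE[where G = "\<lambda>x. \<bar>indicator (cube c (2*r)) x * w x\<bar>" and P = P])
      (use a assms(3) p_pos in \<open>auto simp: \<delta>_def wnorm_def\<close>)
  define X where "X = 4 * (2*(2*r)) ^ CARD('n) / \<delta> * mu powr (-1/s)"
  define l where "l = (2*C) powr (1/\<kappa>) * X"
  have X: "X > 0" and l: "l > 0"
    using \<open>0 < r\<close> \<delta> mu(1) a(2) \<open>0 < C\<close> by (simp_all add: X_def l_def)
  have "wnorm q v (indicator (cube c r)) \<le> ennreal (C * X powr \<kappa>)"
    unfolding X_def using \<delta> mu a(2) \<open>0 < C\<close> \<open>0 < r\<close> cube_subset_double[of r c]
    by (intro wnorm_dual_indicator_le[OF maximal]) auto
  also have "\<dots> < ennreal (l powr \<kappa>)"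
    using X \<open>0 < C\<close> kappa_gt_1 by (simp add: l_def powr_mult powr_powr ennreal_less_iff)
  finally have "ennreal ((m / (4 * l)) powr s) \<le> ?A (cube c r)"
    using m l by (intro wnorm_indicator_ge_holder[OF cube_in_sets_lebesgue cube_measure]) auto
  moreover have "m / (4 * l) = mu powr (1/s) / ?K"
    using \<open>0 < r\<close> \<open>0 < C\<close> mu(1) a(2) power_mult_distrib[of "2::real" 2 "CARD('n)"]
    by (simp add: l_def X_def m_def \<delta>_def power_mult_distrib powr_minus powr_minus_divide field_simps)
  moreover have "(mu powr (1/s) / ?K) powr s = mu / ?K powr s"
    using mu(1) a(2) s_gt_1 \<open>0 < C\<close> by (simp add: powr_divide powr_powr)
  ultimately have "ennreal (mu / ?K powr s) \<le> ?A (cube c r)"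
    by simp
  then have "ennreal (?K powr s) * ennreal (mu / ?K powr s) \<le> ennreal (?K powr s) * ?A (cube c r)"
    by (rule mult_left_mono) simp
  moreover have "?A (cube c (2*r)) \<le> ennreal (?K powr s) * ennreal (mu / ?K powr s)"
    using a mu(1) \<open>0 < C\<close> by (simp add: ennreal_mult[symmetric] ennreal_leI)
  ultimately show ?thesis
    by (rule order_trans[rotated])
qed simp

lemma doubling_constant_exists:
  assumes "maximal_bounded q v C" "AE x in lebesgue. p x \<le> P" "0 \<le> P"
  obtains K where "1 \<le> K" "\<And>c r. 0 < r \<Longrightarrow>
      wnorm (\<lambda>x. ereal (p x)) w (indicator (cube c (2 * r))) < \<infinity> \<Longrightarrow>
      wnorm (\<lambda>x. ereal (p x)) w (indicator (cube c (2 * r)))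
        \<le> ennreal K * wnorm (\<lambda>x. ereal (p x)) w (indicator (cube c r))"
proof
  define C' where "C' = max C 1"
  have "1 \<le> (2*C') powr (1/\<kappa>)" "1 \<le> (4::real) powr P" "(1::real) \<le> 2 ^ CARD('n)"
    using \<open>0 \<le> P\<close> kappa_gt_1 by (auto simp: C'_def intro!: ge_one_powr_ge_zero)
  then have "1 * 1 * 1 * 1 \<le> 16 * (2*C') powr (1/\<kappa>) * 2 ^ CARD('n) * 4 powr P"
    by (intro mult_mono) auto
  then show "1 \<le> (16 * (2*C') powr (1/\<kappa>) * 2 ^ CARD('n) * 4 powr P) powr s"
    using s_gt_1 by (intro ge_one_powr_ge_zero) auto
  show "wnorm (\<lambda>x. ereal (p x)) w (indicator (cube c (2 * r)))
      \<le> ennreal ((16 * (2*C') powr (1/\<kappa>) * 2 ^ CARD('n) * 4 powr P) powr s)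
        * wnorm (\<lambda>x. ereal (p x)) w (indicator (cube c r))"
    if "0 < r" "wnorm (\<lambda>x. ereal (p x)) w (indicator (cube c (2 * r))) < \<infinity>" for c r
    using assms that maximal_bounded_mono[OF assms(1), of C']
    by (intro wnorm_double_cube_le) (auto simp: C'_def)
qed

end

lemma ess_bounded_exponentE:
  assumes "p_plus p < \<infinity>"
  obtains P :: real where "AE x in lebesgue. p x \<le> P" "0 \<le> P"
proof -
  obtain P0 where P0: "p_plus p \<le> ereal P0"
    using assms by (cases "p_plus p") auto
  have "AE x in lebesgue. ereal (p x) \<le> p_plus p"
    unfolding p_plus_def by (rule esssup_AE)
  then have "AE x in lebesgue. p x \<le> max P0 0"
  proof (rule eventually_mono)
    fix x assume "ereal (p x) \<le> p_plus p"
    then have "ereal (p x) \<le> ereal P0"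
      using P0 by (rule order_trans)
    then show "p x \<le> max P0 0"
      by simp
  qed
  then show ?thesis
    using that[of "max P0 0"] by simp
qed

theorem lemma3p4:
  fixes p w :: "real^'n \<Rightarrow> real"
  assumes "p \<in> borel_measurable lebesgue"
    and "\<forall>x. 0 < p x"
    and "0 < p_minus p" and "p_plus p < \<infinity>"
    and "w \<in> W_class p"
  shows "\<exists>C::real. C \<ge> 1 \<and> (\<forall>c r. r > 0 \<longrightarrow>
     wnorm (\<lambda>x. ereal (p x)) w (indicator (cube c r))
       \<le> wnorm (\<lambda>x. ereal (p x)) w (indicator (cube c (2 * r))) \<and>
     wnorm (\<lambda>x. ereal (p x)) w (indicator (cube c (2 * r)))
       \<le> ennreal C * wnorm (\<lambda>x. ereal (p x)) w (indicator (cube c r)))"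
proof -
  obtain ps where ps: "0 < ps"
      "\<And>Q. Q \<in> cubes \<Longrightarrow> wnorm (\<lambda>x. ereal (p x / ps)) (\<lambda>x. w x powr ps) (indicator Q) < \<infinity>"
    using assms(5) unfolding W_class_def by blast
  obtain \<kappa> s C where "1 < \<kappa>" "1 < s" "AE x in lebesgue. 1 \<le> s * p x"
    and maximal: "maximal_bounded (dual_exp s \<kappa> p) (\<lambda>x. w x powr (-\<kappa>/s)) C"
    using assms(5) unfolding W_class_def maximal_bounded_def dual_exp_def by blast
  then interpret dual_exponent p w s \<kappa>
    using assms(1,2,5) by unfold_locales (auto simp: W_class_def is_weight_def)
  obtain P where P: "AE x in lebesgue. p x \<le> P" "0 \<le> P"
    using assms(4) by (rule ess_bounded_exponentE)
  obtain K where "1 \<le> K" and doubling: "\<And>c r. 0 < r \<Longrightarrow>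
      wnorm (\<lambda>x. ereal (p x)) w (indicator (cube c (2 * r))) < \<infinity> \<Longrightarrow>
      wnorm (\<lambda>x. ereal (p x)) w (indicator (cube c (2 * r)))
        \<le> ennreal K * wnorm (\<lambda>x. ereal (p x)) w (indicator (cube c r))"
    using doubling_constant_exists[OF maximal P] by blast
  have finite: "wnorm (\<lambda>x. ereal (p x)) w (indicator (cube c r)) < \<infinity>" if "0 < r" for c r
    using that by (intro wnorm_indicator_finite_of_powr[OF ps(1) w_pos] ps(2) cube_in_cubes)
  have mono: "wnorm (\<lambda>x. ereal (p x)) w (indicator (cube c r))
      \<le> wnorm (\<lambda>x. ereal (p x)) w (indicator (cube c (2 * r)))" if "0 < r" for c r
    using that p_pos by (intro wnorm_indicator_mono cube_subset_double AE_I2) (auto intro: less_imp_le)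
  show ?thesis
  proof (intro exI[of _ K] conjI allI impI)
    show "1 \<le> K"
      by fact
  next
    fix c :: "real^'n" and r :: real
    assume "0 < r"
    then show "wnorm (\<lambda>x. ereal (p x)) w (indicator (cube c r))
        \<le> wnorm (\<lambda>x. ereal (p x)) w (indicator (cube c (2 * r)))"
      by (rule mono)
    show "wnorm (\<lambda>x. ereal (p x)) w (indicator (cube c (2 * r)))
        \<le> ennreal K * wnorm (\<lambda>x. ereal (p x)) w (indicator (cube c r))"
      using \<open>0 < r\<close> doubling finite[of "2 * r"] by simp
  qed
qed

end
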